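(* Let $q$ be even and let $H$ be a $BH(n,q)$ matrix, $H_{i,j}=e^{2\pi i L_{i,j}/q}$ with $L$ an integer matrix, whose $\mathbb{Z}_q$-rank is $r$. Suppose there exist integer matrices $Q$ of size $n\times r$ and $S$ of size $r\times n$ with $QS\equiv L\pmod q$ such that every entry of the first row of $S$ is even. Then there exists a $BH(2n,q)$ matrix whose $\mathbb{Z}_q$-rank is $r$.
   Context: A $BH(n,q)$ matrix is an $n\times n$ complex matrix whose entries are $q$-th roots of unity and which satisfies $HH^\ast=nI_n$. The $\mathbb{Z}_q$-rank of an $n\times n$ integer matrix $L$ is the smallest positive integer $r$ such that there exist integer matrices $S$ ($n\times r$) and $T$ ($r\times n$) with $ST\equiv L\pmod q$ entrywise; the $\mathbb{Z}_q$-rank of a $BH(n,q)$ matrix $H$ is that of the integer matrix $L$ with entries in $\{0,\dots,q-1\}$ and $H_{i,j}=e^{2\pi i L_{i,j}/q}$. *)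

theory Defs
  imports Complex_Main
begin

text \<open>n x n matrices are represented as functions on indices, only entries
with indices < n are relevant.\<close>

definition is_BH :: "nat \<Rightarrow> nat \<Rightarrow> (nat \<Rightarrow> nat \<Rightarrow> complex) \<Rightarrow> bool" where
  "is_BH n q H \<longleftrightarrow>
     (\<forall>i<n. \<forall>j<n. H i j ^ q = 1) \<and>
     (\<forall>i<n. \<forall>k<n. (\<Sum>j<n. H i j * cnj (H k j)) = (if i = k then of_nat n else 0))"

definition phase_matrix :: "nat \<Rightarrow> nat \<Rightarrow> (nat \<Rightarrow> nat \<Rightarrow> complex) \<Rightarrow> (nat \<Rightarrow> nat \<Rightarrow> int) \<Rightarrow> bool" where
  "phase_matrix n q H L \<longleftrightarrow>
     (\<forall>i<n. \<forall>j<n. 0 \<le> L i j \<and> L i j < int q \<and>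
        H i j = exp (2 * of_real pi * \<i> * of_int (L i j) / of_nat q))"

definition zq_factors :: "nat \<Rightarrow> nat \<Rightarrow> nat \<Rightarrow> (nat \<Rightarrow> nat \<Rightarrow> int) \<Rightarrow> (nat \<Rightarrow> nat \<Rightarrow> int) \<Rightarrow> (nat \<Rightarrow> nat \<Rightarrow> int) \<Rightarrow> bool" where
  "zq_factors q n r Q S L \<longleftrightarrow>
     (\<forall>i<n. \<forall>j<n. (\<Sum>k<r. Q i k * S k j) mod int q = L i j mod int q)"

definition zq_rank :: "nat \<Rightarrow> nat \<Rightarrow> (nat \<Rightarrow> nat \<Rightarrow> int) \<Rightarrow> nat" where
  "zq_rank q n L = (LEAST r. 0 < r \<and> (\<exists>Q S. zq_factors q n r Q S L))"

end

theory Submission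
  imports Defs "HOL-Analysis.Analysis"
begin

(* Write e(x) = exp(2 pi i x / q).  From a BH(n,q) matrix H with
   phase matrix L and a factorization L == Q S (mod q) we build the 2n x 2n
   matrix  H' = [[H, D H], [H, -D H]],  D = diag(e(Q i 0)),  whose phase matrix
   is  L' = [[L, L + Q0], [L, L + Q0 + q/2]]  (reduced mod q, Q0 the first
   column of Q repeated along rows).
   1. Elementary facts about e (periodicity, conjugation, e(q/2) = -1).
   2. H' is a BH(2n,q) matrix for any choice of the diagonal D: the inner
      product of two rows of H' is (1 + u_i conj u_k) times an inner product
      of rows of H, where u_i = +-e(Q i 0) is the factor on the right block.
   3. Rank: L' has the factorization Q' S' of the same length r, where Q' adds
      q/2 to the first column in the lower half and S' adds 1 to the first row
      in the right half; the correction (q/2) S 0 j vanishes mod q exactly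
      because the first row of S is even.  Conversely L is the top-left block
      of L', so every factorization of L' restricts to one of L. *)

definition root_exp :: "nat \<Rightarrow> int \<Rightarrow> complex" where
  "root_exp q x = exp (2 * of_real pi * \<i> * of_int x / of_nat q)"

lemma root_exp_add: "root_exp q (x + y) = root_exp q x * root_exp q y"
  unfolding root_exp_def by (simp add: exp_add[symmetric] algebra_simps add_divide_distrib)

lemma root_exp_multiple:
  assumes "q > 0" shows "root_exp q (int q * m) = 1"
proof -
  have "2 * complex_of_real pi * \<i> * of_int (int q * m) / of_nat q = \<i> * (of_int m * (of_real pi * 2))"
    using assms by (simp add: field_simps)
  then show ?thesis unfolding root_exp_def by simp
qed

lemma root_exp_mod:
  assumes "q > 0" shows "root_exp q (x mod int q) = root_exp q x"
proof -
  have "root_exp q x = root_exp q (x mod int q + int q * (x div int q))" by simp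
  also have "\<dots> = root_exp q (x mod int q)"
    by (simp only: root_exp_add root_exp_multiple[OF assms] mult_1_right)
  finally show ?thesis by simp
qed

lemma root_exp_power:
  assumes "q > 0" shows "root_exp q x ^ q = 1"
proof -
  have "root_exp q x ^ q = exp (of_nat q * (2 * of_real pi * \<i> * of_int x / of_nat q))"
    unfolding root_exp_def by (rule exp_of_nat_mult[symmetric])
  also have "\<dots> = root_exp q (int q * x)" unfolding root_exp_def using assms by (simp add: field_simps)
  finally show ?thesis using root_exp_multiple[OF assms] by simp
qed

lemma root_exp_unimodular: "root_exp q x * cnj (root_exp q x) = 1"
proof -
  have "cnj (root_exp q x) = root_exp q (- x)" unfolding root_exp_def by (simp add: exp_cnj)
  then have "root_exp q x * cnj (root_exp q x) = root_exp q (x + - x)" by (simp only: root_exp_add)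
  then show ?thesis by (simp add: root_exp_def)
qed

text \<open>For even q the phase q/2 is the sign -1; this produces the minus block.\<close>
lemma root_exp_half:
  assumes "even q" "q > 0" shows "root_exp q (int q div 2) = -1"
proof -
  obtain m where m: "q = 2 * m" "m > 0" using assms by auto
  have "2 * complex_of_real pi * \<i> * of_int (int q div 2) / of_nat q = of_real pi * \<i>"
    using m by (simp add: field_simps)
  then show ?thesis unfolding root_exp_def by simp
qed

lemma phase_matrix_root_exp:
  assumes "phase_matrix n q H L" "i < n" "j < n"
  shows "H i j = root_exp q (L i j)"
  using assms unfolding phase_matrix_def root_exp_def by simp

definition fold_index :: "nat \<Rightarrow> nat \<Rightarrow> nat" where
  "fold_index n i = (if i < n then i else i - n)"

lemma fold_index_less: "i < 2 * n \<Longrightarrow> fold_index n i < n"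
  by (auto simp: fold_index_def)

text \<open>Phase matrix [[L, L + d], [L, L + d + q/2]] mod q, where d i is added
  along row i in the right half.\<close>
definition doubled_phase :: "nat \<Rightarrow> nat \<Rightarrow> (nat \<Rightarrow> nat \<Rightarrow> int) \<Rightarrow> (nat \<Rightarrow> int) \<Rightarrow> nat \<Rightarrow> nat \<Rightarrow> int" where
  "doubled_phase q n L d i j =
     (L (fold_index n i) (fold_index n j) + (if n \<le> j then d (fold_index n i) else 0)
      + (if n \<le> i \<and> n \<le> j then int q div 2 else 0)) mod int q"

lemma phase_matrix_doubled:
  assumes "q > 0"
  shows "phase_matrix (2 * n) q (\<lambda>i j. root_exp q (doubled_phase q n L d i j)) (doubled_phase q n L d)"
  using assms unfolding phase_matrix_def doubled_phase_def root_exp_def by auto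

lemma sum_lessThan_double:
  "(\<Sum>j<2 * (n::nat). f j) = (\<Sum>j<n. f j) + (\<Sum>j<n. f (j + n))"
proof -
  have "(\<Sum>j<2*n. f j) = sum f {0..<n} + sum f {n..<2*n}"
    by (simp add: lessThan_atLeast0 sum.atLeastLessThan_concat)
  also have "sum f {n..<2*n} = (\<Sum>j<n. f (j + n))"
    using sum.shift_bounds_nat_ivl[of f 0 n n] by (simp add: lessThan_atLeast0 mult_2)
  finally show ?thesis by (simp add: lessThan_atLeast0)
qed

lemma doubled_row_inner:
  fixes M H :: "nat \<Rightarrow> nat \<Rightarrow> complex" and u :: "nat \<Rightarrow> complex"
  assumes left: "\<And>j. j < n \<Longrightarrow> M i j = H (fold_index n i) j \<and> M k j = H (fold_index n k) j"
    and right: "\<And>j. j < n \<Longrightarrow> M i (j + n) = H (fold_index n i) j * u i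
                               \<and> M k (j + n) = H (fold_index n k) j * u k"
  shows "(\<Sum>j<2 * n. M i j * cnj (M k j))
       = (1 + u i * cnj (u k)) * (\<Sum>j<n. H (fold_index n i) j * cnj (H (fold_index n k) j))"
proof -
  let ?G = "\<Sum>j<n. H (fold_index n i) j * cnj (H (fold_index n k) j)"
  have "(\<Sum>j<2*n. M i j * cnj (M k j))
      = (\<Sum>j<n. M i j * cnj (M k j)) + (\<Sum>j<n. M i (j+n) * cnj (M k (j+n)))"
    by (rule sum_lessThan_double)
  also have "(\<Sum>j<n. M i j * cnj (M k j)) = ?G"
    by (rule sum.cong) (simp_all add: left)
  also have "(\<Sum>j<n. M i (j+n) * cnj (M k (j+n))) = (u i * cnj (u k)) * ?G"
    unfolding sum_distrib_left by (rule sum.cong) (simp_all add: right algebra_simps)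
  finally show ?thesis by (simp add: algebra_simps)
qed

lemma is_BH_doubled:
  assumes "even q" "q > 0" "is_BH n q H" "phase_matrix n q H L"
  shows "is_BH (2 * n) q (\<lambda>i j. root_exp q (doubled_phase q n L d i j))"
proof -
  define H' where "H' i j = root_exp q (doubled_phase q n L d i j)" for i j
  define u where "u i = root_exp q (d (fold_index n i)) * (if n \<le> i then -1 else 1)" for i
  have H'_eq: "H' i j = root_exp q (L (fold_index n i) (fold_index n j))
                        * (if n \<le> j then u i else 1)" for i j
    unfolding H'_def doubled_phase_def root_exp_mod[OF \<open>q > 0\<close>] root_exp_add u_def
    using root_exp_half[OF assms(1,2)] by (auto simp: root_exp_def)
  have left: "H' i j = H (fold_index n i) j"
    and right: "H' i (j + n) = H (fold_index n i) j * u i" if "i < 2 * n" "j < n" for i j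
    using that H'_eq[of i j] H'_eq[of i "j + n"]
      phase_matrix_root_exp[OF assms(4) fold_index_less[OF that(1)] that(2)]
    by (simp_all add: fold_index_def)
  have u_unimodular: "u i * cnj (u i) = 1" for i
    using root_exp_unimodular[of q "d (fold_index n i)"] by (simp add: u_def)
  have "(\<Sum>j<2 * n. H' i j * cnj (H' k j)) = (if i = k then of_nat (2 * n) else 0)"
    if i: "i < 2 * n" and k: "k < 2 * n" for i k
  proof -
    have inner: "(\<Sum>j<2 * n. H' i j * cnj (H' k j)) = (1 + u i * cnj (u k))
        * (if fold_index n i = fold_index n k then of_nat n else 0)"
      using doubled_row_inner[of n H' i H k u] left right i k assms(3)
        fold_index_less[OF i] fold_index_less[OF k]
      unfolding is_BH_def by simp
    show ?thesis
    proof (cases "fold_index n i = fold_index n k")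
      case False
      then show ?thesis using inner by auto
    next
      case same_block: True
      show ?thesis
      proof (cases "i = k")
        case True
        then show ?thesis using inner u_unimodular[of k] by simp
      next
        case False
        then have "u i = - u k"
          using same_block i k by (auto simp: u_def fold_index_def split: if_splits)
        then show ?thesis using inner u_unimodular[of k] False by simp
      qed
    qed
  qed
  moreover have "H' i j ^ q = 1" for i j
    unfolding H'_def using root_exp_power[OF \<open>q > 0\<close>] by simp
  ultimately show ?thesis unfolding is_BH_def H'_def by blast
qed

text \<open>The rank is attained: L = L * I is a factorization of length n + 1.\<close>
lemma zq_rank_attained:
  "0 < zq_rank q n L \<and> (\<exists>Q S. zq_factors q n (zq_rank q n L) Q S L)"
proof -
  define Q where "Q i k = (if k < n then L i k else 0)" for i k
  define S :: "nat \<Rightarrow> nat \<Rightarrow> int" where "S k j = (if k = j then 1 else 0)" for k j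
  have "zq_factors q n (Suc n) Q S L"
    unfolding zq_factors_def
  proof (intro allI impI)
    fix i j assume "i < n" "j < n"
    have "(\<Sum>k<Suc n. Q i k * S k j) = (\<Sum>k<Suc n. if k = j then L i j else 0)"
      by (rule sum.cong) (auto simp: Q_def S_def \<open>j < n\<close>)
    also have "\<dots> = L i j" using \<open>j < n\<close> by simp
    finally show "(\<Sum>k<Suc n. Q i k * S k j) mod int q = L i j mod int q" by simp
  qed
  then have "0 < Suc n \<and> (\<exists>Q S. zq_factors q n (Suc n) Q S L)" by blast
  then show ?thesis unfolding zq_rank_def by (rule LeastI)
qed

lemma zq_rank_le: "0 < r \<Longrightarrow> zq_factors q n r Q S L \<Longrightarrow> zq_rank q n L \<le> r"
  unfolding zq_rank_def by (blast intro: Least_le)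

lemma zq_factors_restrict:
  assumes "zq_factors q m r Q S L'" "n \<le> m"
    and "\<And>i j. i < n \<Longrightarrow> j < n \<Longrightarrow> L' i j mod int q = L i j mod int q"
  shows "zq_factors q n r Q S L"
  using assms unfolding zq_factors_def by auto

lemma zq_factors_doubled:
  assumes "even q" "0 < r" "zq_factors q n r Q S L" and even_row: "\<forall>j<n. even (S 0 j)"
  shows "\<exists>Q' S'. zq_factors q (2 * n) r Q' S' (doubled_phase q n L (\<lambda>i. Q i 0))"
proof -
  define Q' where "Q' i k = Q (fold_index n i) k + (if n \<le> i \<and> k = 0 then int q div 2 else 0)" for i k
  define S' where "S' k j = S k (fold_index n j) + (if n \<le> j \<and> k = 0 then 1 else 0)" for k j
  have "(\<Sum>k<r. Q' i k * S' k j) mod int q = doubled_phase q n L (\<lambda>i. Q i 0) i j mod int q"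
    if i: "i < 2 * n" and j: "j < 2 * n" for i j
  proof -
    let ?a = "fold_index n i" and ?b = "fold_index n j"
    define shift where "shift = (if n \<le> j then Q ?a 0 else 0)
                                + (if n \<le> i \<and> n \<le> j then int q div 2 else 0)"
    define error where "error = (if n \<le> i then int q div 2 * S 0 ?b else 0)"
    text \<open>Only the k = 0 term of the product changes.\<close>
    have "(\<Sum>k<r. Q' i k * S' k j)
        = (\<Sum>k<r. Q ?a k * S k ?b + (if k = 0 then shift + error else 0))"
      by (rule sum.cong) (auto simp: Q'_def S'_def shift_def error_def algebra_simps)
    also have "\<dots> = (\<Sum>k<r. Q ?a k * S k ?b) + shift + error"
      using \<open>0 < r\<close> by (simp add: sum.distrib)
    finally have expand: "(\<Sum>k<r. Q' i k * S' k j) = (\<Sum>k<r. Q ?a k * S k ?b) + shift + error" .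
    have "int q dvd error"
    proof -
      obtain t where "S 0 ?b = 2 * t" using even_row fold_index_less[OF j] by blast
      moreover obtain m where "q = 2 * m" using \<open>even q\<close> by blast
      ultimately show ?thesis by (simp add: error_def)
    qed
    then have "(\<Sum>k<r. Q' i k * S' k j) mod int q = ((\<Sum>k<r. Q ?a k * S k ?b) + shift) mod int q"
      unfolding expand by (metis add_0_right dvd_eq_mod_eq_0 mod_add_right_eq)
    also have "\<dots> = (L ?a ?b + shift) mod int q"
      using assms(3) fold_index_less[OF i] fold_index_less[OF j]
      unfolding zq_factors_def by (intro mod_add_cong) auto
    finally show ?thesis by (simp add: doubled_phase_def shift_def add.assoc)
  qed
  then show ?thesis unfolding zq_factors_def by blast
qed

theorem corollary1:
  fixes n q r :: nat and H :: "nat \<Rightarrow> nat \<Rightarrow> complex" and L :: "nat \<Rightarrow> nat \<Rightarrow> int"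
  assumes "even q" and "q > 0"
    and "is_BH n q H"
    and "phase_matrix n q H L"
    and "zq_rank q n L = r"
    and "\<exists>Q S. zq_factors q n r Q S L \<and> (\<forall>j<n. even (S 0 j))"
  shows "\<exists>H' L'. is_BH (2 * n) q H' \<and> phase_matrix (2 * n) q H' L' \<and> zq_rank q (2 * n) L' = r"
proof -
  obtain Q S where fac: "zq_factors q n r Q S L" and even_row: "\<forall>j<n. even (S 0 j)"
    using assms(6) by blast
  have "0 < r" using zq_rank_attained[of q n L] assms(5) by simp
  define L' where "L' = doubled_phase q n L (\<lambda>i. Q i 0)"
  have "zq_rank q (2 * n) L' \<le> r"
    using zq_factors_doubled[OF assms(1) \<open>0 < r\<close> fac even_row] zq_rank_le \<open>0 < r\<close>
    unfolding L'_def by blast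
  moreover have "r \<le> zq_rank q (2 * n) L'"
  proof -
    obtain Q2 S2 where "zq_factors q (2 * n) (zq_rank q (2 * n) L') Q2 S2 L'"
      and "0 < zq_rank q (2 * n) L'" using zq_rank_attained by blast
    moreover have "L' i j mod int q = L i j mod int q" if "i < n" "j < n" for i j
      using that by (simp add: L'_def doubled_phase_def fold_index_def)
    ultimately have "zq_factors q n (zq_rank q (2 * n) L') Q2 S2 L"
      using zq_factors_restrict[of q "2 * n" _ Q2 S2 L' n L] by simp
    then show ?thesis using zq_rank_le \<open>0 < zq_rank q (2 * n) L'\<close> assms(5) by blast
  qed
  ultimately have "zq_rank q (2 * n) L' = r" by simp
  then show ?thesis
    using is_BH_doubled[OF assms(1-4)] phase_matrix_doubled[OF assms(2)] unfolding L'_def by blast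
qed

end
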